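(* A coarse space $(X,\mathcal E)$ has $\operatorname{asdim}(X)\le n$ for some $n\in\omega$ if and only if for every $\varepsilon\in\mathcal E$ there exist $\delta\in\mathcal E$ and a coloring $\chi:X\to\{0,\dots,n\}$ such that every $\chi$-monochrome $\varepsilon$-chain $C\subset X$ satisfies $C\times C\subset\delta$.
   Context: A coarse space is a pair $(X,\mathcal E)$ of a set and a family of entourages $\varepsilon\subset X\times X$ that contain the diagonal, are symmetric, are (up to containment) closed under composition, and such that any symmetric $\delta$ with $\Delta_X\subset\delta\subset\varepsilon\in\mathcal E$ is in $\mathcal E$. $B(x,\varepsilon)=\{y:(x,y)\in\varepsilon\}$; $\operatorname{mesh}(\mathcal U)=\bigcup_{U\in\mathcal U}U\times U$. $\operatorname{asdim}(X)$ is the least $n\in\omega$ such that for every $\varepsilon\in\mathcal E$ there is a cover $\mathcal U$ of $X$ with $\operatorname{mesh}(\mathcal U)\subset\delta$ for some $\delta\in\mathcal E$ and each $B(x,\varepsilon)$ meeting at most $n+1$ members of $\mathcal U$ ($\infty$ if none). An $\varepsilon$-chain is a finite set $\{x_0,\dots,x_m\}$ with $(x_i,x_{i+1})\in\varepsilon$ for all $i<m$; it is $\chi$-monochrome if $\chi$ is constant on it. *)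

theory Defs
  imports Main "HOL-Library.Extended_Nat"
begin

definition coarse_space :: "'a set \<Rightarrow> ('a \<times> 'a) set set \<Rightarrow> bool" where
  "coarse_space X E \<longleftrightarrow>
     (\<forall>\<epsilon>\<in>E. \<epsilon> \<subseteq> X \<times> X \<and> Id_on X \<subseteq> \<epsilon> \<and> sym \<epsilon>) \<and>
     (\<forall>\<epsilon>\<in>E. \<forall>\<delta>\<in>E. \<exists>\<eta>\<in>E. \<epsilon> O \<delta> \<subseteq> \<eta>) \<and>
     (\<forall>\<epsilon>\<in>E. \<forall>\<delta>. sym \<delta> \<and> Id_on X \<subseteq> \<delta> \<and> \<delta> \<subseteq> \<epsilon> \<longrightarrow> \<delta> \<in> E)"

definition ball_ent :: "'a \<Rightarrow> ('a \<times> 'a) set \<Rightarrow> 'a set" where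
  "ball_ent x \<epsilon> = {y. (x, y) \<in> \<epsilon>}"

definition mesh :: "'a set set \<Rightarrow> ('a \<times> 'a) set" where
  "mesh \<U> = (\<Union>U\<in>\<U>. U \<times> U)"

definition asdim_prop :: "'a set \<Rightarrow> ('a \<times> 'a) set set \<Rightarrow> nat \<Rightarrow> bool" where
  "asdim_prop X E n \<longleftrightarrow>
     (\<forall>\<epsilon>\<in>E. \<exists>\<U>. (\<forall>U\<in>\<U>. U \<subseteq> X) \<and> \<Union>\<U> = X \<and>
        (\<exists>\<delta>\<in>E. mesh \<U> \<subseteq> \<delta>) \<and>
        (\<forall>x\<in>X. finite {U\<in>\<U>. U \<inter> ball_ent x \<epsilon> \<noteq> {}} \<and>
                card {U\<in>\<U>. U \<inter> ball_ent x \<epsilon> \<noteq> {}} \<le> n + 1))"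

definition asdim :: "'a set \<Rightarrow> ('a \<times> 'a) set set \<Rightarrow> enat" where
  "asdim X E = (if \<exists>n. asdim_prop X E n then enat (LEAST n. asdim_prop X E n) else \<infinity>)"

definition eps_chain :: "('a \<times> 'a) set \<Rightarrow> 'a set \<Rightarrow> bool" where
  "eps_chain \<epsilon> C \<longleftrightarrow>
     (\<exists>m::nat. \<exists>xs::nat \<Rightarrow> 'a. C = xs ` {0..m} \<and> (\<forall>i<m. (xs i, xs (Suc i)) \<in> \<epsilon>))"

definition monochrome :: "('a \<Rightarrow> nat) \<Rightarrow> 'a set \<Rightarrow> bool" where
  "monochrome \<chi> C \<longleftrightarrow> (\<forall>x\<in>C. \<forall>y\<in>C. \<chi> x = \<chi> y)"

end

theory Submission
  imports Defs
begin

text \<open>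
  If asdim X \<le> n, take for \<open>\<epsilon>\<^sup>2\<^sup>n\<^sup>+\<^sup>2\<close> a uniformly bounded cover \<open>\<U>\<close> such that each ball
  \<open>B(x, \<epsilon>\<^sup>2\<^sup>n\<^sup>+\<^sup>2)\<close> meets at most n + 1 members. The families \<open>T\<^sub>r(x)\<close> of members meeting \<open>B(x, \<epsilon>\<^sup>r)\<close>
  increase with r and have between 1 and n + 1 elements for r \<le> 2n + 2, so some step
  \<open>T\<^sub>2\<^sub>j(x) = T\<^sub>2\<^sub>j\<^sub>+\<^sub>2(x)\<close> with j \<le> n is stationary. Call the first stationary \<open>T\<^sub>2\<^sub>j(x)\<close> the star of x
  and colour x by its size minus one. If x and y are \<open>\<epsilon>\<close>-close, the star of x equals \<open>T\<^sub>2\<^sub>j\<^sub>+\<^sub>1(y)\<close> and is thus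
  comparable with the star of y, so equal colours force equal stars. Along a monochrome
  \<open>\<epsilon>\<close>-chain the star is therefore constant, and any of its members is \<open>\<epsilon>\<^sup>2\<^sup>n\<^sup>+\<^sup>2\<close>-close to every
  point of the chain.

  Conversely, given a colouring for \<open>\<epsilon> O \<epsilon>\<close>, the classes of the equivalence relation generated
  by monochrome \<open>\<epsilon> O \<epsilon>\<close>-steps are spanned by monochrome chains, hence bounded, and distinct
  classes meeting one \<open>\<epsilon>\<close>-ball contain points of distinct colours in it.
\<close>

lemma sym_relpow:
  assumes "sym r" shows "sym (r ^^ k)"
proof (induction k)
  case 0 then show ?case by (simp add: sym_Id)
next
  case (Suc k)
  show ?case
  proof (rule symI)
    fix x y assume "(x, y) \<in> r ^^ Suc k"
    then obtain z where "(x, z) \<in> r ^^ k" "(z, y) \<in> r" by (rule relpow_Suc_E)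
    then show "(y, x) \<in> r ^^ Suc k"
      using Suc.IH assms by (meson relpow_Suc_I2 symD)
  qed
qed

lemma relpow_le_if_refl_at:
  assumes "(x, x) \<in> r" "(x, y) \<in> r ^^ m" "m \<le> k"
  shows "(x, y) \<in> r ^^ k"
  using assms(3)
proof (induction k rule: dec_induct)
  case base then show ?case using assms(2) .
next
  case (step k) then show ?case using relpow_Suc_I2[OF assms(1)] by blast
qed

lemma equiv_trancl:
  assumes "r \<subseteq> A \<times> A" "refl_on A r" "sym r"
  shows "equiv A (r\<^sup>+)"
  using assms(2) unfolding refl_on_def
  by (intro equivI trancl_subset_Sigma[OF assms(1)] sym_trancl[OF assms(3)] trans_trancl refl_onI)
    (simp add: r_into_trancl')

lemma chain_stabilises:
  fixes A :: "nat \<Rightarrow> 'b set"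
  assumes mono: "\<And>i. i \<le> n \<Longrightarrow> A i \<subseteq> A (Suc i)"
    and finite: "\<And>i. i \<le> Suc n \<Longrightarrow> finite (A i)"
    and card: "card (A (Suc n)) \<le> card (A 0) + n"
  shows "\<exists>j\<le>n. A j = A (Suc j)"
proof (rule ccontr)
  assume "\<not> ?thesis"
  then have strict: "A i \<subset> A (Suc i)" if "i \<le> n" for i
    using mono that by blast
  have "card (A 0) + i \<le> card (A i)" if "i \<le> Suc n" for i
    using that
  proof (induction i)
    case (Suc i)
    have "card (A i) < card (A (Suc i))"
      using strict Suc.prems finite by (simp add: psubset_card_mono)
    with Suc show ?case by simp
  qed simp
  from this[of "Suc n"] card show False by simp
qed

lemma eps_chain_mono:
  assumes "eps_chain r C" "r \<subseteq> s" shows "eps_chain s C"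
  using assms unfolding eps_chain_def by blast

lemma eps_chain_nonempty: "eps_chain r C \<Longrightarrow> C \<noteq> {}"
  unfolding eps_chain_def by auto

lemma eps_chain_constant:
  assumes "eps_chain r C"
    and step: "\<And>x y. x \<in> C \<Longrightarrow> y \<in> C \<Longrightarrow> (x, y) \<in> r \<Longrightarrow> g x = g y"
    and "x \<in> C" "y \<in> C"
  shows "g x = g y"
proof -
  from assms(1) obtain m xs where C: "C = xs ` {0..m}" and xs: "\<forall>i<m. (xs i, xs (Suc i)) \<in> r"
    unfolding eps_chain_def by blast
  have const: "g (xs i) = g (xs 0)" if "i \<le> m" for i
    using that
  proof (induction i)
    case (Suc i)
    have "g (xs i) = g (xs (Suc i))"
      using Suc.prems xs by (intro step) (auto simp: C)
    with Suc show ?case by simp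
  qed simp
  obtain i j where "i \<le> m" "j \<le> m" "x = xs i" "y = xs j"
    using assms(3,4) unfolding C by auto
  then show ?thesis using const by metis
qed

lemma rtrancl_imp_eps_chain:
  assumes "(a, b) \<in> r\<^sup>*"
  shows "\<exists>C. eps_chain r C \<and> a \<in> C \<and> b \<in> C \<and> C \<subseteq> r\<^sup>* `` {a}"
proof -
  obtain m f where f: "f 0 = a" "f m = b" "\<forall>i<m. (f i, f (Suc i)) \<in> r"
    using assms by (auto simp: rtrancl_power relpow_fun_conv)
  have reach: "f i \<in> r\<^sup>* `` {a}" if "i \<le> m" for i
    using that
  proof (induction i)
    case (Suc i)
    then show ?case using f(3) by (auto intro: rtrancl_into_rtrancl)
  qed (simp add: f(1))
  have "eps_chain r (f ` {0..m})"
    unfolding eps_chain_def using f(3) by blast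
  moreover have "a \<in> f ` {0..m}" "b \<in> f ` {0..m}"
    using f(1,2) by (auto intro: image_eqI[of _ _ 0] image_eqI[of _ _ m])
  ultimately show ?thesis using reach by auto
qed

definition touching :: "'a set set \<Rightarrow> ('a \<times> 'a) set \<Rightarrow> 'a \<Rightarrow> 'a set set" where
  "touching \<U> \<epsilon> x = {U \<in> \<U>. U \<inter> ball_ent x \<epsilon> \<noteq> {}}"

lemma touching_iff: "U \<in> touching \<U> \<epsilon> x \<longleftrightarrow> U \<in> \<U> \<and> (\<exists>u\<in>U. (x, u) \<in> \<epsilon>)"
  unfolding touching_def ball_ent_def by blast

lemma touching_mono: "\<epsilon> \<subseteq> \<delta> \<Longrightarrow> touching \<U> \<epsilon> x \<subseteq> touching \<U> \<delta> x"
  unfolding subset_iff touching_iff by blast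

lemma card_meeting_le_if_colours_separate:
  assumes colours: "\<chi> ` B \<subseteq> {0..n}"
    and separate: "\<And>U V u v. U \<in> \<U> \<Longrightarrow> V \<in> \<U> \<Longrightarrow> u \<in> U \<inter> B \<Longrightarrow> v \<in> V \<inter> B \<Longrightarrow>
                     \<chi> u = \<chi> v \<Longrightarrow> U = V"
  shows "finite {U \<in> \<U>. U \<inter> B \<noteq> {}} \<and> card {U \<in> \<U>. U \<inter> B \<noteq> {}} \<le> n + 1"
proof -
  let ?F = "{U \<in> \<U>. U \<inter> B \<noteq> {}}"
  define p where "p U = (SOME u. u \<in> U \<inter> B)" for U
  have p: "p U \<in> U \<inter> B" if "U \<in> ?F" for U
    unfolding p_def by (rule someI_ex) (use that in blast)
  have inj: "inj_on (\<chi> \<circ> p) ?F"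
  proof (rule inj_onI)
    fix U V assume "U \<in> ?F" "V \<in> ?F" "(\<chi> \<circ> p) U = (\<chi> \<circ> p) V"
    then show "U = V" by (intro separate[of U V "p U" "p V"]) (use p in auto)
  qed
  have range: "(\<chi> \<circ> p) ` ?F \<subseteq> {0..n}"
    using p colours by auto
  have "finite ?F" by (rule inj_on_finite[OF inj range]) simp
  moreover have "card ?F \<le> card {0..n}" by (rule card_inj_on_le[OF inj range]) simp
  ultimately show ?thesis by simp
qed

lemma coarse_space_entourageD:
  assumes "coarse_space X E" "\<epsilon> \<in> E"
  shows "\<epsilon> \<subseteq> X \<times> X" "refl_on X \<epsilon>" "sym \<epsilon>"
  using assms unfolding coarse_space_def refl_on_def by auto

lemma coarse_space_relcomp:
  assumes "coarse_space X E" "\<epsilon> \<in> E" "\<delta> \<in> E"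
  shows "\<exists>\<eta>\<in>E. \<epsilon> O \<delta> \<subseteq> \<eta>"
  using assms unfolding coarse_space_def by blast

lemma coarse_space_relpow:
  assumes "coarse_space X E" "\<epsilon> \<in> E"
  shows "\<exists>\<eta>\<in>E. \<epsilon> ^^ Suc k \<subseteq> \<eta>"
proof (induction k)
  case 0 then show ?case using assms(2) by auto
next
  case (Suc k)
  then obtain \<eta> where "\<eta> \<in> E" "\<epsilon> ^^ Suc k \<subseteq> \<eta>" by blast
  moreover obtain \<eta>' where "\<eta>' \<in> E" "\<eta> O \<epsilon> \<subseteq> \<eta>'"
    using coarse_space_relcomp[OF assms(1) \<open>\<eta> \<in> E\<close> assms(2)] by blast
  ultimately show ?case by (metis relcomp_mono relpow.simps(2) subset_refl subset_trans)
qed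

lemma asdim_prop_mono: "asdim_prop X E m \<Longrightarrow> m \<le> n \<Longrightarrow> asdim_prop X E n"
  unfolding asdim_prop_def by (meson add_le_mono1 order_trans)

lemma asdim_le_enat_iff: "asdim X E \<le> enat n \<longleftrightarrow> asdim_prop X E n"
proof (cases "\<exists>m. asdim_prop X E m")
  case True
  then have "asdim_prop X E (LEAST m. asdim_prop X E m)" by (rule LeastI_ex)
  with True show ?thesis
    unfolding asdim_def by (auto intro: asdim_prop_mono Least_le)
qed (simp add: asdim_def)

locale bounded_touching_cover =
  fixes X :: "'a set" and \<U> :: "'a set set" and \<epsilon> :: "('a \<times> 'a) set" and n :: nat
  assumes covers: "\<Union>\<U> = X"
    and refl: "refl_on X \<epsilon>"
    and sym: "sym \<epsilon>"
    and finite_touching: "x \<in> X \<Longrightarrow> finite (touching \<U> (\<epsilon> ^^ (2 * n + 2)) x)"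
    and card_touching: "x \<in> X \<Longrightarrow> card (touching \<U> (\<epsilon> ^^ (2 * n + 2)) x) \<le> n + 1"
begin

abbreviation touching_pow :: "nat \<Rightarrow> 'a \<Rightarrow> 'a set set" where
  "touching_pow r x \<equiv> touching \<U> (\<epsilon> ^^ r) x"

lemma touching_pow_mono: "x \<in> X \<Longrightarrow> r \<le> s \<Longrightarrow> touching_pow r x \<subseteq> touching_pow s x"
  using refl relpow_le_if_refl_at unfolding refl_on_def subset_iff touching_iff by meson

lemma touching_pow_Suc_neighbour: "(y, x) \<in> \<epsilon> \<Longrightarrow> touching_pow r x \<subseteq> touching_pow (Suc r) y"
  unfolding subset_iff touching_iff by (meson relpow_Suc_I2)

lemma touching_pow_0_nonempty: "x \<in> X \<Longrightarrow> touching_pow 0 x \<noteq> {}"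
  using covers by (auto simp: touching_iff)

lemma finite_touching_pow: "x \<in> X \<Longrightarrow> r \<le> 2 * n + 2 \<Longrightarrow> finite (touching_pow r x)"
  by (rule finite_subset[OF touching_pow_mono finite_touching])

lemma card_touching_pow_le: "x \<in> X \<Longrightarrow> r \<le> 2 * n + 2 \<Longrightarrow> card (touching_pow r x) \<le> n + 1"
  by (rule order_trans[OF card_mono[OF finite_touching touching_pow_mono] card_touching])

lemma ex_stationary_step:
  assumes "x \<in> X" shows "\<exists>j\<le>n. touching_pow (2 * j) x = touching_pow (2 * j + 2) x"
proof -
  have "\<exists>j\<le>n. touching_pow (2 * j) x = touching_pow (2 * Suc j) x"
  proof (rule chain_stabilises)
    show "touching_pow (2 * i) x \<subseteq> touching_pow (2 * Suc i) x" for i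
      by (rule touching_pow_mono[OF assms]) simp
    show "finite (touching_pow (2 * i) x)" if "i \<le> Suc n" for i
      by (rule finite_touching_pow[OF assms]) (use that in simp)
    have "card (touching_pow (2 * Suc n) x) \<le> n + 1"
      by (rule card_touching_pow_le[OF assms]) simp
    moreover have "card (touching_pow (2 * 0) x) > 0"
      using touching_pow_0_nonempty[OF assms] finite_touching_pow[OF assms, of 0]
      by (simp add: card_gt_0_iff)
    ultimately show "card (touching_pow (2 * Suc n) x) \<le> card (touching_pow (2 * 0) x) + n"
      by linarith
  qed
  moreover have "2 * Suc j = 2 * j + 2" for j :: nat by simp
  ultimately show ?thesis by metis
qed

definition radius :: "'a \<Rightarrow> nat" where
  "radius x = (LEAST j. touching_pow (2 * j) x = touching_pow (2 * j + 2) x)"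

definition star :: "'a \<Rightarrow> 'a set set" where
  "star x = touching_pow (2 * radius x) x"

definition colour :: "'a \<Rightarrow> nat" where
  "colour x = card (star x) - 1"

lemma radius_le: "x \<in> X \<Longrightarrow> radius x \<le> n"
  using ex_stationary_step unfolding radius_def by (meson Least_le order_trans)

lemma star_stationary: "x \<in> X \<Longrightarrow> touching_pow (2 * radius x + 2) x = star x"
  using ex_stationary_step unfolding radius_def star_def by (metis (mono_tags, lifting) LeastI)

lemma star_subset: "x \<in> X \<Longrightarrow> star x \<subseteq> touching_pow (2 * n + 2) x"
  unfolding star_def by (rule touching_pow_mono) (use radius_le[of x] in simp_all)

lemma finite_star: "x \<in> X \<Longrightarrow> finite (star x)"
  unfolding star_def by (rule finite_touching_pow) (use radius_le[of x] in simp_all)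

lemma star_nonempty: "x \<in> X \<Longrightarrow> star x \<noteq> {}"
  unfolding star_def using touching_pow_mono[of x 0] touching_pow_0_nonempty by blast

lemma colour_le:
  assumes "x \<in> X" shows "colour x \<le> n"
proof -
  have "card (star x) \<le> n + 1"
    unfolding star_def by (rule card_touching_pow_le[OF assms]) (use radius_le[OF assms] in simp)
  then show ?thesis unfolding colour_def by simp
qed

lemma star_eq_if_same_colour:
  assumes "x \<in> X" "y \<in> X" "(x, y) \<in> \<epsilon>" "colour x = colour y"
  shows "star x = star y"
proof -
  have "(y, x) \<in> \<epsilon>" using assms(3) sym by (rule symD[rotated])
  then have "star x \<subseteq> touching_pow (Suc (2 * radius x)) y"
    unfolding star_def by (rule touching_pow_Suc_neighbour)
  moreover have "touching_pow (Suc (2 * radius x)) y \<subseteq> touching_pow (Suc (Suc (2 * radius x))) x"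
    by (rule touching_pow_Suc_neighbour[OF assms(3)])
  moreover have "touching_pow (Suc (Suc (2 * radius x))) x = star x"
    using star_stationary[OF assms(1)] by simp
  ultimately have star_x: "star x = touching_pow (Suc (2 * radius x)) y" by blast
  have "card (star x) > 0" "card (star y) > 0"
    using assms(1,2) by (simp_all add: card_gt_0_iff finite_star star_nonempty)
  with assms(4) have "card (star x) = card (star y)"
    unfolding colour_def by arith
  moreover have "star x \<subseteq> star y \<or> star y \<subseteq> star x"
    using nat_le_linear[of "Suc (2 * radius x)" "2 * radius y"] touching_pow_mono[OF assms(2)]
    unfolding star_x star_def[of y] by blast
  ultimately show ?thesis
    using finite_star assms(1,2) by (metis card_subset_eq)
qed

lemma monochrome_chain_bounded:
  assumes "C \<subseteq> X" "eps_chain \<epsilon> C" "monochrome colour C"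
  shows "C \<times> C \<subseteq> \<epsilon> ^^ (2 * n + 2) O mesh \<U> O \<epsilon> ^^ (2 * n + 2)"
proof -
  have "star u = star v" if "u \<in> C" "v \<in> C" "(u, v) \<in> \<epsilon>" for u v
    using star_eq_if_same_colour[of u v] assms(1,3) that unfolding monochrome_def by blast
  then have star_const: "star x = star y" if "x \<in> C" "y \<in> C" for x y
    using eps_chain_constant[where g = star, OF assms(2) _ that] by blast
  obtain x0 where "x0 \<in> C" using eps_chain_nonempty[OF assms(2)] by blast
  then obtain U where U: "U \<in> star x0" using assms(1) star_nonempty by blast
  show ?thesis
  proof clarify
    fix x y assume "x \<in> C" "y \<in> C"
    then have "U \<in> touching_pow (2 * n + 2) x" "U \<in> touching_pow (2 * n + 2) y"
      using U star_const \<open>x0 \<in> C\<close> star_subset assms(1) by blast+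
    then obtain u v where "U \<in> \<U>" "u \<in> U" "v \<in> U"
      "(x, u) \<in> \<epsilon> ^^ (2 * n + 2)" "(y, v) \<in> \<epsilon> ^^ (2 * n + 2)"
      unfolding touching_iff by blast
    moreover from this have "(v, y) \<in> \<epsilon> ^^ (2 * n + 2)"
      using sym_relpow[OF sym] by (blast dest: symD)
    ultimately show "(x, y) \<in> \<epsilon> ^^ (2 * n + 2) O mesh \<U> O \<epsilon> ^^ (2 * n + 2)"
      unfolding mesh_def by blast
  qed
qed

lemma ex_colouring:
  "\<exists>\<chi>::'a \<Rightarrow> nat. \<chi> ` X \<subseteq> {0..n} \<and>
     (\<forall>C. C \<subseteq> X \<and> eps_chain \<epsilon> C \<and> monochrome \<chi> C \<longrightarrow>
          C \<times> C \<subseteq> \<epsilon> ^^ (2 * n + 2) O mesh \<U> O \<epsilon> ^^ (2 * n + 2))"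
proof (intro exI[of _ colour] conjI allI impI)
  show "colour ` X \<subseteq> {0..n}" using colour_le by (simp add: image_subset_iff)
  fix C assume "C \<subseteq> X \<and> eps_chain \<epsilon> C \<and> monochrome colour C"
  then show "C \<times> C \<subseteq> \<epsilon> ^^ (2 * n + 2) O mesh \<U> O \<epsilon> ^^ (2 * n + 2)"
    by (intro monochrome_chain_bounded) simp_all
qed

end

lemma monochrome_steps_bounded:
  assumes "\<eta> \<subseteq> X \<times> X"
    and chains: "\<forall>C. C \<subseteq> X \<and> eps_chain \<eta> C \<and> monochrome \<chi> C \<longrightarrow> C \<times> C \<subseteq> \<delta>"
    and steps: "(a, b) \<in> {(u, v) \<in> \<eta>. \<chi> u = \<chi> v}\<^sup>+"
  shows "(a, b) \<in> \<delta>"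
proof -
  let ?R = "{(u, v) \<in> \<eta>. \<chi> u = \<chi> v}"
  have "?R \<subseteq> X \<times> X" using assms(1) by blast
  with steps have "a \<in> X" using trancl_subset_Sigma by blast
  have same_colour: "c \<in> X \<and> \<chi> c = \<chi> a" if "(a, c) \<in> ?R\<^sup>*" for c
    using that by (induction rule: rtrancl_induct) (use assms(1) \<open>a \<in> X\<close> in auto)
  obtain C where C: "eps_chain ?R C" "a \<in> C" "b \<in> C" "C \<subseteq> ?R\<^sup>* `` {a}"
    using rtrancl_imp_eps_chain[OF trancl_into_rtrancl[OF steps]] by blast
  have "?R \<subseteq> \<eta>" by auto
  with C(1) have "eps_chain \<eta> C" by (rule eps_chain_mono)
  have "c \<in> X \<and> \<chi> c = \<chi> a" if "c \<in> C" for c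
    using C(4) that same_colour by blast
  then have "C \<subseteq> X" "monochrome \<chi> C"
    unfolding monochrome_def by auto
  with \<open>eps_chain \<eta> C\<close> have "C \<times> C \<subseteq> \<delta>" using chains by blast
  then show ?thesis using C(2,3) by blast
qed

lemma colourings_if_asdim_prop:
  assumes cs: "coarse_space X E" and asdim: "asdim_prop X E n"
  shows "\<forall>\<epsilon>\<in>E. \<exists>\<delta>\<in>E. \<exists>\<chi>::'a \<Rightarrow> nat. \<chi> ` X \<subseteq> {0..n} \<and>
           (\<forall>C. C \<subseteq> X \<and> eps_chain \<epsilon> C \<and> monochrome \<chi> C \<longrightarrow> C \<times> C \<subseteq> \<delta>)"
proof
  fix \<epsilon> assume "\<epsilon> \<in> E"
  obtain \<eta> where "\<eta> \<in> E" and \<eta>: "\<epsilon> ^^ (2 * n + 2) \<subseteq> \<eta>"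
    using coarse_space_relpow[OF cs \<open>\<epsilon> \<in> E\<close>, of "2 * n + 1"] by auto
  with asdim obtain \<U> \<delta>\<^sub>0 where covers: "\<Union>\<U> = X" and "\<delta>\<^sub>0 \<in> E" "mesh \<U> \<subseteq> \<delta>\<^sub>0"
    and bounded: "\<And>x. x \<in> X \<Longrightarrow> finite (touching \<U> \<eta> x) \<and> card (touching \<U> \<eta> x) \<le> n + 1"
    unfolding asdim_prop_def touching_def[symmetric] by metis
  obtain \<delta>\<^sub>1 \<delta> where "\<delta> \<in> E" and \<delta>: "\<delta>\<^sub>0 O \<eta> \<subseteq> \<delta>\<^sub>1" "\<eta> O \<delta>\<^sub>1 \<subseteq> \<delta>"
    using coarse_space_relcomp[OF cs] \<open>\<eta> \<in> E\<close> \<open>\<delta>\<^sub>0 \<in> E\<close> by metis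
  have "bounded_touching_cover X \<U> \<epsilon> n"
  proof
    fix x assume "x \<in> X"
    then show "finite (touching \<U> (\<epsilon> ^^ (2 * n + 2)) x)"
      using bounded touching_mono[OF \<eta>] by (meson finite_subset)
    from \<open>x \<in> X\<close> show "card (touching \<U> (\<epsilon> ^^ (2 * n + 2)) x) \<le> n + 1"
      using bounded touching_mono[OF \<eta>] by (meson card_mono order_trans)
  qed (use covers coarse_space_entourageD[OF cs \<open>\<epsilon> \<in> E\<close>] in auto)
  then obtain \<chi> :: "'a \<Rightarrow> nat" where colours: "\<chi> ` X \<subseteq> {0..n}" and chains:
    "\<forall>C. C \<subseteq> X \<and> eps_chain \<epsilon> C \<and> monochrome \<chi> C \<longrightarrow>
         C \<times> C \<subseteq> \<epsilon> ^^ (2 * n + 2) O mesh \<U> O \<epsilon> ^^ (2 * n + 2)"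
    using bounded_touching_cover.ex_colouring by blast
  have "mesh \<U> O \<epsilon> ^^ (2 * n + 2) \<subseteq> \<delta>\<^sub>1"
    using relcomp_mono[OF \<open>mesh \<U> \<subseteq> \<delta>\<^sub>0\<close> \<eta>] \<delta>(1) by (rule order_trans)
  then have bound: "\<epsilon> ^^ (2 * n + 2) O mesh \<U> O \<epsilon> ^^ (2 * n + 2) \<subseteq> \<delta>"
    by (rule order_trans[OF relcomp_mono[OF \<eta>] \<delta>(2)])
  show "\<exists>\<delta>\<in>E. \<exists>\<chi>::'a \<Rightarrow> nat. \<chi> ` X \<subseteq> {0..n} \<and>
          (\<forall>C. C \<subseteq> X \<and> eps_chain \<epsilon> C \<and> monochrome \<chi> C \<longrightarrow> C \<times> C \<subseteq> \<delta>)"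
  proof (rule bexI[OF _ \<open>\<delta> \<in> E\<close>], rule exI[of _ \<chi>], intro conjI allI impI)
    fix C assume "C \<subseteq> X \<and> eps_chain \<epsilon> C \<and> monochrome \<chi> C"
    then show "C \<times> C \<subseteq> \<delta>" by (rule order_trans[OF chains[rule_format] bound])
  qed (rule colours)
qed

lemma asdim_prop_if_colourings:
  assumes cs: "coarse_space X E"
    and colourings: "\<forall>\<epsilon>\<in>E. \<exists>\<delta>\<in>E. \<exists>\<chi>::'a \<Rightarrow> nat. \<chi> ` X \<subseteq> {0..n} \<and>
           (\<forall>C. C \<subseteq> X \<and> eps_chain \<epsilon> C \<and> monochrome \<chi> C \<longrightarrow> C \<times> C \<subseteq> \<delta>)"
  shows "asdim_prop X E n"
  unfolding asdim_prop_def
proof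
  fix \<epsilon> assume "\<epsilon> \<in> E"
  obtain \<eta> where "\<eta> \<in> E" and \<eta>: "\<epsilon> O \<epsilon> \<subseteq> \<eta>"
    using coarse_space_relcomp[OF cs \<open>\<epsilon> \<in> E\<close> \<open>\<epsilon> \<in> E\<close>] by blast
  from bspec[OF colourings \<open>\<eta> \<in> E\<close>] obtain \<delta> and \<chi> :: "'a \<Rightarrow> nat"
    where "\<delta> \<in> E" and colours: "\<chi> ` X \<subseteq> {0..n}"
      and chains: "\<forall>C. C \<subseteq> X \<and> eps_chain \<eta> C \<and> monochrome \<chi> C \<longrightarrow> C \<times> C \<subseteq> \<delta>"
    by blast
  note \<epsilon>_ent = coarse_space_entourageD[OF cs \<open>\<epsilon> \<in> E\<close>]
  note \<eta>_ent = coarse_space_entourageD[OF cs \<open>\<eta> \<in> E\<close>]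
  define R where "R = {(a, b) \<in> \<eta>. \<chi> a = \<chi> b}"
  have R_sub: "R \<subseteq> X \<times> X" using \<eta>_ent(1) unfolding R_def by blast
  have equiv: "equiv X (R\<^sup>+)"
    using \<eta>_ent R_sub unfolding R_def by (intro equiv_trancl) (auto simp: refl_on_def sym_def)
  have mesh: "mesh (X // R\<^sup>+) \<subseteq> \<delta>"
  proof (clarsimp simp: mesh_def)
    fix U a b assume "U \<in> X // R\<^sup>+" "a \<in> U" "b \<in> U"
    then have "(a, b) \<in> R\<^sup>+" using in_quotient_imp_in_rel[OF equiv] by blast
    then show "(a, b) \<in> \<delta>"
      unfolding R_def by (rule monochrome_steps_bounded[OF \<eta>_ent(1) chains])
  qed
  have bounded: "finite {U \<in> X // R\<^sup>+. U \<inter> ball_ent x \<epsilon> \<noteq> {}} \<and>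
                  card {U \<in> X // R\<^sup>+. U \<inter> ball_ent x \<epsilon> \<noteq> {}} \<le> n + 1" for x
  proof (rule card_meeting_le_if_colours_separate)
    show "\<chi> ` ball_ent x \<epsilon> \<subseteq> {0..n}"
      using colours \<epsilon>_ent(1) unfolding ball_ent_def by blast
    fix U V u v
    assume UV: "U \<in> X // R\<^sup>+" "V \<in> X // R\<^sup>+" "u \<in> U \<inter> ball_ent x \<epsilon>" "v \<in> V \<inter> ball_ent x \<epsilon>"
      and "\<chi> u = \<chi> v"
    moreover have "(u, v) \<in> \<eta>"
      using UV(3,4) \<eta> \<epsilon>_ent(3) unfolding ball_ent_def by (blast dest: symD)
    ultimately have "(u, v) \<in> R\<^sup>+" unfolding R_def by blast
    then show "U = V" using quotient_eq_iff[OF equiv UV(1,2)] UV(3,4) by blast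
  qed
  show "\<exists>\<U>. (\<forall>U\<in>\<U>. U \<subseteq> X) \<and> \<Union>\<U> = X \<and> (\<exists>\<delta>\<in>E. mesh \<U> \<subseteq> \<delta>) \<and>
          (\<forall>x\<in>X. finite {U \<in> \<U>. U \<inter> ball_ent x \<epsilon> \<noteq> {}} \<and> card {U \<in> \<U>. U \<inter> ball_ent x \<epsilon> \<noteq> {}} \<le> n + 1)"
    using in_quotient_imp_subset[OF equiv] Union_quotient[OF equiv]
      bexI[where P = "\<lambda>\<delta>. mesh (X // R\<^sup>+) \<subseteq> \<delta>", OF mesh \<open>\<delta> \<in> E\<close>] bounded
    by (intro exI[of _ "X // R\<^sup>+"] conjI ballI) auto
qed

theorem corollary2p4:
  fixes X :: "'a set" and E :: "('a \<times> 'a) set set" and n :: nat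
  assumes "coarse_space X E"
  shows "asdim X E \<le> enat n \<longleftrightarrow>
    (\<forall>\<epsilon>\<in>E. \<exists>\<delta>\<in>E. \<exists>\<chi>::'a \<Rightarrow> nat. \<chi> ` X \<subseteq> {0..n} \<and>
       (\<forall>C. C \<subseteq> X \<and> eps_chain \<epsilon> C \<and> monochrome \<chi> C \<longrightarrow> C \<times> C \<subseteq> \<delta>))"
  unfolding asdim_le_enat_iff
  using colourings_if_asdim_prop[OF assms] asdim_prop_if_colourings[OF assms] by (rule iffI)

end
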